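(* Let $\mathcal{A}=(Q,\delta,I,F)$ be a complete Büchi automaton, let $p,q\in Q$ with $p\preceq_{\mathit{de}}q$, let $\alpha$ be an infinite word and let $\mathcal{G}_\alpha=(V,E)$ be the run DAG of $\mathcal{A}$ over $\alpha$. Then for all $i\ge0$, if $(p,i)\in V$ and $(q,i)\in V$, then $\mathrm{rank}_\alpha(p,i)\le\lceil\mathrm{rank}_\alpha(q,i)\rceil$.
   Context: A Büchi automaton is $\mathcal{A}=(Q,\delta,I,F)$ over a finite alphabet $\Sigma$, $\delta:Q\times\Sigma\to2^Q$, complete if $\delta(q,a)\ne\emptyset$ always; $n=|Q|$. A run from $q$ on $\alpha=\alpha_0\alpha_1\cdots$ is a state sequence $\rho$ with $\rho_0=q$, $\rho_{i+1}\in\delta(\rho_i,\alpha_i)$. Delayed simulation: in the game from $(p_0,r_0)$, in round $i$ Spoiler picks $p_i\xrightarrow{\alpha_i}p_{i+1}$ and Duplicator answers $r_i\xrightarrow{\alpha_i}r_{i+1}$; a Duplicator strategy is a map $\sigma$ with $\sigma(r,p\xrightarrow{a}p')\in\delta(r,a)$ (no lookahead). Duplicator wins if for all $i$, $p_i\in F$ implies $r_k\in F$ for some $k\ge i$. $p\preceq_{\mathit{de}}r$ iff Duplicator has a winning strategy from $(p,r)$. Run DAG: $\mathcal{G}_\alpha=(V,E)$ with $V\subseteq Q\times\omega$, $(q,i)\in V$ iff some run of $\mathcal{A}$ over $\alpha$ from an initial state has $\rho_i=q$, and $((q,i),(q',i'))\in E$ iff $i'=i+1$ and $q'\in\delta(q,\alpha_i)$.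 A vertex $(p,i)$ is accepting if $p\in F$; it is finite in a subgraph if only finitely many vertices are reachable from it there, and endangered if it cannot reach an accepting vertex there. Ranks: let $\mathcal{G}^0=\mathcal{G}_\alpha$, $j=0$; repeat until fixpoint or for at most $2n+1$ steps: assign rank $j$ to all finite vertices of $\mathcal{G}^j$ and let $\mathcal{G}^{j+1}$ be $\mathcal{G}^j$ without them; assign rank $j+1$ to all endangered vertices of $\mathcal{G}^{j+1}$ and let $\mathcal{G}^{j+2}$ be $\mathcal{G}^{j+1}$ without them; set $j:=j+2$. Vertices never assigned a rank get rank $\omega$. $\mathrm{rank}_\alpha(v)$ denotes the rank of $v$. For $x\in\omega$, $\lceil x\rceil$ is the smallest even number $\ge x$, and $\lceil\omega\rceil=\omega$. *)

theory Defs
  imports Main "HOL-Library.Extended_Nat"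
begin

definition buchi_automaton ::
  "'q set \<Rightarrow> 'a set \<Rightarrow> ('q \<Rightarrow> 'a \<Rightarrow> 'q set) \<Rightarrow> 'q set \<Rightarrow> 'q set \<Rightarrow> bool" where
  "buchi_automaton Q \<Sigma> \<delta> I F \<longleftrightarrow>
     finite Q \<and> finite \<Sigma> \<and> I \<subseteq> Q \<and> F \<subseteq> Q \<and>
     (\<forall>q\<in>Q. \<forall>a\<in>\<Sigma>. \<delta> q a \<subseteq> Q)"

definition complete_aut :: "'q set \<Rightarrow> 'a set \<Rightarrow> ('q \<Rightarrow> 'a \<Rightarrow> 'q set) \<Rightarrow> bool" where
  "complete_aut Q \<Sigma> \<delta> \<longleftrightarrow> (\<forall>q\<in>Q. \<forall>a\<in>\<Sigma>. \<delta> q a \<noteq> {})"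

definition word :: "'a set \<Rightarrow> (nat \<Rightarrow> 'a) \<Rightarrow> bool" where
  "word \<Sigma> \<alpha> \<longleftrightarrow> (\<forall>i. \<alpha> i \<in> \<Sigma>)"

definition is_run :: "('q \<Rightarrow> 'a \<Rightarrow> 'q set) \<Rightarrow> 'q \<Rightarrow> (nat \<Rightarrow> 'a) \<Rightarrow> (nat \<Rightarrow> 'q) \<Rightarrow> bool" where
  "is_run \<delta> q \<alpha> \<rho> \<longleftrightarrow> \<rho> 0 = q \<and> (\<forall>i. \<rho> (Suc i) \<in> \<delta> (\<rho> i) (\<alpha> i))"

text \<open>Duplicator's states in the play determined by strategy sigma (a map from the
current Duplicator state and Spoiler's transition p -a-> p' to a successor),
against Spoiler's state sequence ps over the letter sequence beta.\<close>
fun dup_play :: "('q \<Rightarrow> ('q \<times> 'a \<times> 'q) \<Rightarrow> 'q) \<Rightarrow> (nat \<Rightarrow> 'q) \<Rightarrow> (nat \<Rightarrow> 'a) \<Rightarrow> 'q \<Rightarrow> nat \<Rightarrow> 'q" where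
  "dup_play \<sigma> ps \<beta> r0 0 = r0"
| "dup_play \<sigma> ps \<beta> r0 (Suc i) = \<sigma> (dup_play \<sigma> ps \<beta> r0 i) (ps i, \<beta> i, ps (Suc i))"

definition dup_strategy :: "'q set \<Rightarrow> 'a set \<Rightarrow> ('q \<Rightarrow> 'a \<Rightarrow> 'q set) \<Rightarrow> ('q \<Rightarrow> ('q \<times> 'a \<times> 'q) \<Rightarrow> 'q) \<Rightarrow> bool" where
  "dup_strategy Q \<Sigma> \<delta> \<sigma> \<longleftrightarrow>
     (\<forall>r\<in>Q. \<forall>p\<in>Q. \<forall>a\<in>\<Sigma>. \<forall>p'\<in>\<delta> p a. \<sigma> r (p, a, p') \<in> \<delta> r a)"

definition delayed_sim ::
  "'q set \<Rightarrow> 'a set \<Rightarrow> ('q \<Rightarrow> 'a \<Rightarrow> 'q set) \<Rightarrow> 'q set \<Rightarrow> 'q \<Rightarrow> 'q \<Rightarrow> bool" where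
  "delayed_sim Q \<Sigma> \<delta> F p r \<longleftrightarrow>
     (\<exists>\<sigma>. dup_strategy Q \<Sigma> \<delta> \<sigma> \<and>
       (\<forall>ps \<beta>. word \<Sigma> \<beta> \<longrightarrow> is_run \<delta> p \<beta> ps \<longrightarrow>
          (\<forall>i. ps i \<in> F \<longrightarrow> (\<exists>k\<ge>i. dup_play \<sigma> ps \<beta> r k \<in> F))))"

definition dag_V :: "('q \<Rightarrow> 'a \<Rightarrow> 'q set) \<Rightarrow> 'q set \<Rightarrow> (nat \<Rightarrow> 'a) \<Rightarrow> ('q \<times> nat) set" where
  "dag_V \<delta> I \<alpha> = {(q, i). \<exists>q0 \<rho>. q0 \<in> I \<and> is_run \<delta> q0 \<alpha> \<rho> \<and> \<rho> i = q}"

definition dag_E :: "('q \<Rightarrow> 'a \<Rightarrow> 'q set) \<Rightarrow> 'q set \<Rightarrow> (nat \<Rightarrow> 'a) \<Rightarrow> (('q \<times> nat) \<times> ('q \<times> nat)) set" where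
  "dag_E \<delta> I \<alpha> = {((q, i), (q', i')). (q, i) \<in> dag_V \<delta> I \<alpha> \<and> (q', i') \<in> dag_V \<delta> I \<alpha> \<and>
                      i' = Suc i \<and> q' \<in> \<delta> q (\<alpha> i)}"

definition reach_in :: "(('q \<times> nat) \<times> ('q \<times> nat)) set \<Rightarrow> ('q \<times> nat) set \<Rightarrow> ('q \<times> nat) \<Rightarrow> ('q \<times> nat) set" where
  "reach_in E S v = {w. (v, w) \<in> (E \<inter> (S \<times> S))\<^sup>*}"

definition finite_vertex :: "(('q \<times> nat) \<times> ('q \<times> nat)) set \<Rightarrow> ('q \<times> nat) set \<Rightarrow> ('q \<times> nat) \<Rightarrow> bool" where
  "finite_vertex E S v \<longleftrightarrow> finite (reach_in E S v)"

definition endangered_vertex :: "(('q \<times> nat) \<times> ('q \<times> nat)) set \<Rightarrow> 'q set \<Rightarrow> ('q \<times> nat) set \<Rightarrow> ('q \<times> nat) \<Rightarrow> bool" where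
  "endangered_vertex E F S v \<longleftrightarrow> \<not> (\<exists>w\<in>reach_in E S v. fst w \<in> F)"

text \<open>The subgraphs G^0, G^1, ... (as vertex sets; edges are induced).  From G^j with j
even, the finite vertices are removed (they get rank j); from G^j with j odd,
the endangered vertices are removed (they get rank j).\<close>
fun dag_G :: "('q \<Rightarrow> 'a \<Rightarrow> 'q set) \<Rightarrow> 'q set \<Rightarrow> 'q set \<Rightarrow> (nat \<Rightarrow> 'a) \<Rightarrow> nat \<Rightarrow> ('q \<times> nat) set" where
  "dag_G \<delta> I F \<alpha> 0 = dag_V \<delta> I \<alpha>"
| "dag_G \<delta> I F \<alpha> (Suc j) =
     (if even j then {v \<in> dag_G \<delta> I F \<alpha> j. \<not> finite_vertex (dag_E \<delta> I \<alpha>) (dag_G \<delta> I F \<alpha> j) v}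
      else {v \<in> dag_G \<delta> I F \<alpha> j. \<not> endangered_vertex (dag_E \<delta> I \<alpha>) F (dag_G \<delta> I F \<alpha> j) v})"

definition rank_of ::
  "'q set \<Rightarrow> ('q \<Rightarrow> 'a \<Rightarrow> 'q set) \<Rightarrow> 'q set \<Rightarrow> 'q set \<Rightarrow> (nat \<Rightarrow> 'a) \<Rightarrow> ('q \<times> nat) \<Rightarrow> enat" where
  "rank_of Q \<delta> I F \<alpha> v =
     (if \<exists>j\<le>2 * card Q. v \<in> dag_G \<delta> I F \<alpha> j \<and> v \<notin> dag_G \<delta> I F \<alpha> (Suc j)
      then enat (LEAST j. v \<in> dag_G \<delta> I F \<alpha> j \<and> v \<notin> dag_G \<delta> I F \<alpha> (Suc j))
      else \<infinity>)"

definition even_ceil :: "enat \<Rightarrow> enat" where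
  "even_ceil x = (case x of enat k \<Rightarrow> enat (if even k then k else Suc k) | \<infinity> \<Rightarrow> \<infinity>)"

end

theory Submission
  imports Defs
begin

text \<open>If Spoiler walks along an infinite path from \<open>(p, i)\<close> inside \<open>G (2 * j)\<close>, Duplicator's
answer from \<open>(q, i)\<close> is an infinite path inside \<open>G (2 * j)\<close> as well.  Every vertex on an infinite path of \<open>G (2 * j)\<close> survives into
\<open>G (2 * j + 1)\<close>.  A vertex of Duplicator's answer is not endangered there, because at that
moment Spoiler may divert towards an accepting vertex inside \<open>G (2 * j + 1)\<close> and then continue
along an infinite path of \<open>G (2 * j)\<close>: Duplicator has no lookahead, so the answer to the
diverted play agrees with the original one so far, and the delayed winning condition makes it
visit \<open>F\<close> later, inside \<open>G (2 * j + 1)\<close>.  Hence \<open>(p, i) \<in> G (2 * j + 1)\<close> implies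
\<open>(q, i) \<in> G (2 * j + 1)\<close>, which bounds the rank of \<open>(p, i)\<close> by the even ceiling of that of
\<open>(q, i)\<close>.  Koenig's lemma translates between infinitely many reachable vertices and infinite
paths.\<close>

lemma infinite_rtrancl_Image_imp_chain:
  assumes finite_succ: "\<And>x. finite (R `` {x})" and infinite_reach: "infinite (R\<^sup>* `` {v})"
  shows "\<exists>f. f 0 = v \<and> (\<forall>n. (f n, f (Suc n)) \<in> R)"
proof -
  have step: "\<exists>y. (x, y) \<in> R \<and> infinite (R\<^sup>* `` {y})" if "infinite (R\<^sup>* `` {x})" for x
  proof (rule ccontr)
    assume "\<nexists>y. (x, y) \<in> R \<and> infinite (R\<^sup>* `` {y})"
    then have "finite (\<Union>y\<in>R `` {x}. R\<^sup>* `` {y})"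
      using finite_succ by blast
    moreover have "R\<^sup>* `` {x} = insert x (\<Union>y\<in>R `` {x}. R\<^sup>* `` {y})"
      by (auto elim: converse_rtranclE intro: converse_rtrancl_into_rtrancl)
    ultimately show False
      using that by simp
  qed
  define succ where "succ x = (SOME y. (x, y) \<in> R \<and> infinite (R\<^sup>* `` {y}))" for x
  define f where "f n = (succ ^^ n) v" for n
  have succ: "(x, succ x) \<in> R \<and> infinite (R\<^sup>* `` {succ x})" if "infinite (R\<^sup>* `` {x})" for x
    unfolding succ_def using someI_ex[OF step[OF that]] .
  have infinite_f: "infinite (R\<^sup>* `` {f n})" for n
    by (induction n) (simp_all add: f_def infinite_reach succ)
  show ?thesis
  proof (intro exI conjI allI)
    show "f 0 = v" and "(f n, f (Suc n)) \<in> R" for n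
      using succ[OF infinite_f] by (simp_all add: f_def)
  qed
qed

locale run_dag =
  fixes Q :: "'q set" and \<Sigma> :: "'a set" and \<delta> :: "'q \<Rightarrow> 'a \<Rightarrow> 'q set"
    and I F :: "'q set" and \<alpha> :: "nat \<Rightarrow> 'a"
  assumes automaton: "buchi_automaton Q \<Sigma> \<delta> I F" and word: "word \<Sigma> \<alpha>"
begin

abbreviation "V \<equiv> dag_V \<delta> I \<alpha>"
abbreviation "E \<equiv> dag_E \<delta> I \<alpha>"
abbreviation "G \<equiv> dag_G \<delta> I F \<alpha>"
abbreviation "rank \<equiv> rank_of Q \<delta> I F \<alpha>"

text \<open>Paths are indexed relative to their starting level: \<open>\<rho> k\<close> sits at level \<open>i + k\<close>.\<close>

definition path_in :: "('q \<times> nat) set \<Rightarrow> nat \<Rightarrow> (nat \<Rightarrow> 'q) \<Rightarrow> bool" where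
  "path_in S i \<rho> \<longleftrightarrow> (\<forall>k. (\<rho> k, i + k) \<in> S \<and> \<rho> (Suc k) \<in> \<delta> (\<rho> k) (\<alpha> (i + k)))"

definition segment_in :: "('q \<times> nat) set \<Rightarrow> nat \<Rightarrow> nat \<Rightarrow> (nat \<Rightarrow> 'q) \<Rightarrow> bool" where
  "segment_in S i n \<rho> \<longleftrightarrow>
     (\<forall>l\<le>n. (\<rho> l, i + l) \<in> S) \<and> (\<forall>l<n. \<rho> (Suc l) \<in> \<delta> (\<rho> l) (\<alpha> (i + l)))"

lemma finite_states: "finite Q"
  using automaton by (simp add: buchi_automaton_def)

lemma successor_in_states: "q \<in> Q \<Longrightarrow> q' \<in> \<delta> q (\<alpha> i) \<Longrightarrow> q' \<in> Q"
  using automaton word unfolding buchi_automaton_def word_def by blast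

lemma run_in_states: "q \<in> Q \<Longrightarrow> is_run \<delta> q \<alpha> \<rho> \<Longrightarrow> \<rho> n \<in> Q"
  by (induction n) (auto simp: is_run_def intro: successor_in_states)

lemma dag_V_states: "(q, i) \<in> V \<Longrightarrow> q \<in> Q"
  using automaton run_in_states unfolding dag_V_def buchi_automaton_def by blast

lemma dag_E_iff:
  "((q, i), (q', i')) \<in> E \<longleftrightarrow> (q, i) \<in> V \<and> (q', i') \<in> V \<and> i' = Suc i \<and> q' \<in> \<delta> q (\<alpha> i)"
  by (simp add: dag_E_def)

lemma path_in_dag_V:
  assumes "(\<rho> 0, i) \<in> V" and "\<And>k. \<rho> (Suc k) \<in> \<delta> (\<rho> k) (\<alpha> (i + k))"
  shows "path_in V i \<rho>"
proof -
  obtain q0 r where r: "q0 \<in> I" "is_run \<delta> q0 \<alpha> r" "r i = \<rho> 0"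
    using assms(1) unfolding dag_V_def by blast
  define r' where "r' m = (if m \<le> i then r m else \<rho> (m - i))" for m
  have "is_run \<delta> q0 \<alpha> r'"
    unfolding is_run_def
  proof (intro conjI allI)
    show "r' 0 = q0"
      using r(2) by (simp add: r'_def is_run_def)
    show "r' (Suc m) \<in> \<delta> (r' m) (\<alpha> m)" for m
    proof (cases "m < i")
      case True
      then show ?thesis
        using r(2) by (simp add: r'_def is_run_def)
    next
      case False
      then show ?thesis
        using r(3) assms(2)[of "m - i"] by (auto simp: r'_def Suc_diff_le)
    qed
  qed
  moreover have "r' (i + k) = \<rho> k" for k
    using r(3) by (simp add: r'_def)
  ultimately show ?thesis
    using r(1) assms(2) unfolding path_in_def dag_V_def by auto
qed

lemma path_in_mono: "path_in S i \<rho> \<Longrightarrow> S \<subseteq> S' \<Longrightarrow> path_in S' i \<rho>"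
  unfolding path_in_def by blast

lemma segment_in_mono: "segment_in S i n \<rho> \<Longrightarrow> S \<subseteq> S' \<Longrightarrow> segment_in S' i n \<rho>"
  unfolding segment_in_def by blast

lemma path_in_imp_segment_in: "path_in S i \<rho> \<Longrightarrow> segment_in S i n \<rho>"
  unfolding path_in_def segment_in_def by blast

lemma path_in_suffix: "path_in S i \<rho> \<Longrightarrow> path_in S (i + k) (\<lambda>l. \<rho> (k + l))"
  unfolding path_in_def by (metis add.assoc add_Suc_right)

lemma segment_in_suffix:
  "path_in S i \<rho> \<Longrightarrow> k \<le> k' \<Longrightarrow> segment_in S (i + k) (k' - k) (\<lambda>l. \<rho> (k + l))"
  using path_in_imp_segment_in[OF path_in_suffix] .

lemma segment_in_append_path_in:
  assumes segment: "segment_in S i n \<rho>" and path: "path_in S (i + n) \<rho>'" and "\<rho>' 0 = \<rho> n"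
  shows "path_in S i (\<lambda>m. if m \<le> n then \<rho> m else \<rho>' (m - n))" (is "path_in S i ?\<rho>")
  unfolding path_in_def
proof (intro allI)
  fix k
  have tail: "?\<rho> m = \<rho>' (m - n)" if "n \<le> m" for m
    using that \<open>\<rho>' 0 = \<rho> n\<close> by auto
  show "(?\<rho> k, i + k) \<in> S \<and> ?\<rho> (Suc k) \<in> \<delta> (?\<rho> k) (\<alpha> (i + k))"
  proof (cases "k < n")
    case True
    then show ?thesis
      using segment by (simp add: segment_in_def)
  next
    case False
    then obtain d where "k = n + d"
      using le_Suc_ex not_less by blast
    then show ?thesis
      using tail[of k] tail[of "Suc k"] path[unfolded path_in_def, rule_format, of d]
      by (simp add: add.assoc)
  qed
qed

lemma segment_in_imp_reach_in:
  assumes "S \<subseteq> V" and "segment_in S i n \<rho>"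
  shows "(\<rho> n, i + n) \<in> reach_in E S (\<rho> 0, i)"
  using assms(2)
proof (induction n)
  case 0
  then show ?case
    by (simp add: reach_in_def)
next
  case (Suc n)
  then have "((\<rho> n, i + n), (\<rho> (Suc n), i + Suc n)) \<in> E \<inter> (S \<times> S)"
    using assms(1) by (auto simp: segment_in_def dag_E_iff)
  moreover have "(\<rho> n, i + n) \<in> reach_in E S (\<rho> 0, i)"
    using Suc by (simp add: segment_in_def)
  ultimately show ?case
    unfolding reach_in_def by (simp add: rtrancl_into_rtrancl)
qed

lemma reach_in_imp_segment_in:
  assumes "w \<in> reach_in E S (q, i)" and "(q, i) \<in> S"
  shows "\<exists>n \<rho>. \<rho> 0 = q \<and> segment_in S i n \<rho> \<and> w = (\<rho> n, i + n)"
  using assms(1) unfolding reach_in_def mem_Collect_eq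
proof (induction rule: rtrancl_induct)
  case base
  show ?case
    using assms(2) by (intro exI[of _ 0] exI[of _ "\<lambda>_. q"]) (simp add: segment_in_def)
next
  case (step w w')
  then obtain n \<rho> where \<rho>: "\<rho> 0 = q" "segment_in S i n \<rho>" "w = (\<rho> n, i + n)"
    by blast
  obtain q' where w': "w' = (q', Suc (i + n))" "q' \<in> \<delta> (\<rho> n) (\<alpha> (i + n))" "w' \<in> S"
    using step(2) \<rho>(3) by (cases w') (auto simp: dag_E_iff)
  have "segment_in S i (Suc n) (\<rho>(Suc n := q'))"
    using \<rho>(2) w' by (auto simp: segment_in_def le_Suc_eq less_Suc_eq)
  then show ?case
  proof (intro exI conjI)
    show "(\<rho>(Suc n := q')) 0 = q" and "w' = ((\<rho>(Suc n := q')) (Suc n), i + Suc n)"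
      using \<rho>(1) w'(1) by simp_all
  qed
qed

lemma infinite_reach_in_iff_path_in:
  assumes "S \<subseteq> V"
  shows "infinite (reach_in E S (q, i)) \<longleftrightarrow> (\<exists>\<rho>. \<rho> 0 = q \<and> path_in S i \<rho>)"
proof
  let ?R = "E \<inter> (S \<times> S)"
  assume "infinite (reach_in E S (q, i))"
  moreover have "?R `` {v} \<subseteq> Q \<times> {Suc (snd v)}" for v
    using dag_V_states by (auto simp: dag_E_def)
  then have "finite (?R `` {v})" for v
    using finite_states by (meson finite.emptyI finite_SigmaI finite_insert finite_subset)
  ultimately obtain f where f: "f 0 = (q, i)" "\<And>n. (f n, f (Suc n)) \<in> ?R"
    using infinite_rtrancl_Image_imp_chain[of ?R] unfolding reach_in_def by (metis Image_singleton)
  have "f n = (fst (f n), i + n)" for n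
  proof (induction n)
    case 0
    show ?case using f(1) by simp
  next
    case (Suc n)
    then show ?case
      using f(2)[of n] by (cases "f (Suc n)") (auto simp: dag_E_def)
  qed
  then have "path_in S i (fst \<circ> f)"
    using f(2) unfolding path_in_def by (metis comp_apply dag_E_iff IntE mem_Sigma_iff)
  then show "\<exists>\<rho>. \<rho> 0 = q \<and> path_in S i \<rho>"
    using f(1) by (metis comp_apply fst_conv)
next
  assume "\<exists>\<rho>. \<rho> 0 = q \<and> path_in S i \<rho>"
  then obtain \<rho> where "\<rho> 0 = q" "path_in S i \<rho>"
    by blast
  then have "range (\<lambda>k. (\<rho> k, i + k)) \<subseteq> reach_in E S (q, i)"
    using segment_in_imp_reach_in[OF assms(1) path_in_imp_segment_in] by blast
  moreover have "inj (\<lambda>k. (\<rho> k, i + k))"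
    by (rule injI) simp
  ultimately show "infinite (reach_in E S (q, i))"
    using finite_imageD finite_subset infinite_UNIV_nat by blast
qed

lemma dag_G_subset_dag_V: "G j \<subseteq> V"
  by (induction j) auto

lemma dag_G_Suc_subset: "G (Suc j) \<subseteq> G j"
  by auto

declare dag_G.simps(2) [simp del]

lemma dag_G_antimono: "j \<le> j' \<Longrightarrow> G j' \<subseteq> G j"
  by (induction j' rule: dec_induct) (use dag_G_Suc_subset in blast)+

lemma mem_dag_G_Suc_even:
  assumes "even j"
  shows "(q, i) \<in> G (Suc j) \<longleftrightarrow> (\<exists>\<rho>. \<rho> 0 = q \<and> path_in (G j) i \<rho>)"
proof -
  have "(q, i) \<in> G j" if "\<rho> 0 = q" "path_in (G j) i \<rho>" for \<rho>
    using that by (metis add_0_right path_in_def)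
  then show ?thesis
    using assms infinite_reach_in_iff_path_in[OF dag_G_subset_dag_V, of j q i]
    by (auto simp: dag_G.simps(2) finite_vertex_def)
qed

lemma mem_dag_G_Suc_odd:
  assumes "odd j"
  shows "(q, i) \<in> G (Suc j) \<longleftrightarrow>
    (q, i) \<in> G j \<and> (\<exists>n \<rho>. \<rho> 0 = q \<and> segment_in (G j) i n \<rho> \<and> \<rho> n \<in> F)"
proof -
  have "(\<exists>w\<in>reach_in E (G j) (q, i). fst w \<in> F) \<longleftrightarrow>
      (\<exists>n \<rho>. \<rho> 0 = q \<and> segment_in (G j) i n \<rho> \<and> \<rho> n \<in> F)" if "(q, i) \<in> G j"
  proof
    assume "\<exists>w\<in>reach_in E (G j) (q, i). fst w \<in> F"
    then obtain w where "w \<in> reach_in E (G j) (q, i)" "fst w \<in> F"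
      by blast
    then show "\<exists>n \<rho>. \<rho> 0 = q \<and> segment_in (G j) i n \<rho> \<and> \<rho> n \<in> F"
      using reach_in_imp_segment_in[OF _ that] by fastforce
  next
    assume "\<exists>n \<rho>. \<rho> 0 = q \<and> segment_in (G j) i n \<rho> \<and> \<rho> n \<in> F"
    then obtain n \<rho> where "\<rho> 0 = q" "segment_in (G j) i n \<rho>" "\<rho> n \<in> F"
      by blast
    then have "(\<rho> n, i + n) \<in> reach_in E (G j) (q, i)"
      using segment_in_imp_reach_in[OF dag_G_subset_dag_V] by metis
    with \<open>\<rho> n \<in> F\<close> show "\<exists>w\<in>reach_in E (G j) (q, i). fst w \<in> F"
      by force
  qed
  moreover have "(q, i) \<in> G (Suc j) \<longleftrightarrow>
      (q, i) \<in> G j \<and> (\<exists>w\<in>reach_in E (G j) (q, i). fst w \<in> F)"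
    using assms by (simp add: dag_G.simps(2) endangered_vertex_def)
  ultimately show ?thesis
    by blast
qed

lemma path_in_dag_G_Suc_even:
  assumes "even j" and "path_in (G j) i \<rho>"
  shows "path_in (G (Suc j)) i \<rho>"
proof -
  have "(\<rho> k, i + k) \<in> G (Suc j)" for k
    using mem_dag_G_Suc_even[OF assms(1), of "\<rho> k" "i + k"] path_in_suffix[OF assms(2), of k]
    by auto
  then show ?thesis
    using assms(2) by (simp add: path_in_def)
qed

lemma rank_le_enatI:
  assumes "v \<in> V" and "v \<notin> G (Suc c)" and "c \<le> 2 * card Q"
  shows "rank v \<le> enat c"
proof -
  obtain j where j: "j < Suc c" "v \<in> G j" "v \<notin> G (Suc j)"
    using ex_least_nat_less[of "\<lambda>j. v \<notin> G j"] assms(1,2) by auto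
  moreover have "j \<le> 2 * card Q"
    using j(1) assms(3) by simp
  ultimately have "rank v = enat (LEAST j. v \<in> G j \<and> v \<notin> G (Suc j))"
    unfolding rank_of_def by (intro if_P) blast
  also have "\<dots> \<le> enat j"
    using j(2,3) by (simp add: Least_le)
  also have "\<dots> \<le> enat c"
    using j(1) by simp
  finally show ?thesis .
qed

lemma rank_eq_enatD:
  assumes "rank v = enat k"
  shows "k \<le> 2 * card Q" and "v \<notin> G (Suc k)"
proof -
  let ?P = "\<lambda>j. v \<in> G j \<and> v \<notin> G (Suc j)"
  have "\<exists>j\<le>2 * card Q. ?P j"
  proof (rule ccontr)
    assume "\<not> (\<exists>j\<le>2 * card Q. ?P j)"
    then have "rank v = \<infinity>"
      unfolding rank_of_def by (rule if_not_P)
    with assms show False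
      by simp
  qed
  then obtain j where j: "j \<le> 2 * card Q" "?P j" and k: "k = (LEAST j. ?P j)"
    using assms by (auto simp: rank_of_def)
  show "k \<le> 2 * card Q"
    using Least_le[of ?P j] j k by simp
  show "v \<notin> G (Suc k)"
    using LeastI[of ?P j] j(2) k by simp
qed

lemma rank_le_even_ceil:
  assumes "v \<in> V" and "\<And>j. even j \<Longrightarrow> v \<in> G (Suc j) \<Longrightarrow> w \<in> G (Suc j)"
  shows "rank v \<le> even_ceil (rank w)"
proof (cases "rank w")
  case (enat k)
  define c where "c = (if even k then k else Suc k)"
  have "even c" and "k \<le> c"
    by (simp_all add: c_def)
  have "c \<le> 2 * card Q"
    using rank_eq_enatD(1)[OF enat] unfolding c_def by presburger
  moreover have "w \<notin> G (Suc c)"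
    using rank_eq_enatD(2)[OF enat] dag_G_antimono[of "Suc k" "Suc c"] \<open>k \<le> c\<close> by auto
  then have "v \<notin> G (Suc c)"
    using assms(2) \<open>even c\<close> by blast
  ultimately have "rank v \<le> enat c"
    using rank_le_enatI assms(1) by blast
  then show ?thesis
    by (simp add: enat even_ceil_def c_def)
qed (simp add: even_ceil_def)

end

locale duplicator_play = run_dag Q \<Sigma> \<delta> I F \<alpha>
  for Q :: "'q set" and \<Sigma> :: "'a set" and \<delta> :: "'q \<Rightarrow> 'a \<Rightarrow> 'q set" and I F \<alpha> +
  fixes \<sigma> :: "'q \<Rightarrow> 'q \<times> 'a \<times> 'q \<Rightarrow> 'q" and p q :: 'q and i :: nat
  assumes strategy: "dup_strategy Q \<Sigma> \<delta> \<sigma>"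
    and winning: "\<forall>ps \<beta>. word \<Sigma> \<beta> \<longrightarrow> is_run \<delta> p \<beta> ps \<longrightarrow>
      (\<forall>k. ps k \<in> F \<longrightarrow> (\<exists>k'\<ge>k. dup_play \<sigma> ps \<beta> q k' \<in> F))"
    and q_vertex: "(q, i) \<in> V"
begin

abbreviation response :: "(nat \<Rightarrow> 'q) \<Rightarrow> nat \<Rightarrow> 'q" where
  "response \<rho> \<equiv> dup_play \<sigma> \<rho> (\<lambda>k. \<alpha> (i + k)) q"

lemma response_step:
  assumes "path_in V i \<rho>" and "response \<rho> k \<in> Q"
  shows "response \<rho> (Suc k) \<in> \<delta> (response \<rho> k) (\<alpha> (i + k))"
proof -
  have "\<rho> k \<in> Q" and "\<rho> (Suc k) \<in> \<delta> (\<rho> k) (\<alpha> (i + k))"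
    using assms(1) dag_V_states by (auto simp: path_in_def)
  moreover have "\<alpha> (i + k) \<in> \<Sigma>"
    using word by (simp add: word_def)
  ultimately show ?thesis
    using strategy assms(2) by (simp add: dup_strategy_def)
qed

lemma path_in_response:
  assumes "path_in V i \<rho>"
  shows "path_in V i (response \<rho>)"
proof -
  have "response \<rho> k \<in> Q" for k
  proof (induction k)
    case 0
    show ?case
      using q_vertex dag_V_states by simp
  next
    case (Suc k)
    then show ?case
      using response_step[OF assms] successor_in_states by blast
  qed
  then show ?thesis
    using q_vertex response_step[OF assms] by (intro path_in_dag_V) simp_all
qed

lemma response_visits_accepting:
  assumes "path_in V i \<rho>" and "\<rho> 0 = p" and "\<rho> k \<in> F"
  shows "\<exists>k'\<ge>k. response \<rho> k' \<in> F"
proof -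
  have "word \<Sigma> (\<lambda>k. \<alpha> (i + k))"
    using word by (simp add: word_def)
  moreover have "is_run \<delta> p (\<lambda>k. \<alpha> (i + k)) \<rho>"
    using assms(1,2) by (simp add: path_in_def is_run_def)
  ultimately show ?thesis
    using winning assms(3) by blast
qed

lemma response_cong: "(\<And>l. l \<le> K \<Longrightarrow> \<rho> l = \<rho>' l) \<Longrightarrow> l \<le> K \<Longrightarrow> response \<rho> l = response \<rho>' l"
  by (induction l) auto

lemma response_reaches_accepting:
  assumes IH: "\<And>\<rho>'. path_in (G j) i \<rho>' \<Longrightarrow> \<rho>' 0 = p \<Longrightarrow> path_in (G j) i (response \<rho>')"
    and "even j" and \<rho>: "path_in (G (Suc (Suc j))) i \<rho>" "\<rho> 0 = p"
  shows "\<exists>n \<tau>. \<tau> 0 = response \<rho> k \<and> segment_in (G (Suc j)) (i + k) n \<tau> \<and> \<tau> n \<in> F"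
proof -
  have "(\<rho> k, i + k) \<in> G (Suc (Suc j))"
    using \<rho>(1) by (simp add: path_in_def)
  moreover have "odd (Suc j)"
    using \<open>even j\<close> by simp
  ultimately obtain n seg where seg: "seg 0 = \<rho> k" "segment_in (G (Suc j)) (i + k) n seg" "seg n \<in> F"
    using mem_dag_G_Suc_odd by blast
  then have "(seg n, i + k + n) \<in> G (Suc j)"
    by (simp add: segment_in_def)
  then obtain \<rho>\<^sub>F where \<rho>\<^sub>F: "\<rho>\<^sub>F 0 = seg n" "path_in (G j) (i + k + n) \<rho>\<^sub>F"
    using mem_dag_G_Suc_even[OF \<open>even j\<close>] by blast
  define \<rho>\<^sub>1 where "\<rho>\<^sub>1 m = (if m \<le> n then seg m else \<rho>\<^sub>F (m - n))" for m
  define \<rho>' where "\<rho>' m = (if m \<le> k then \<rho> m else \<rho>\<^sub>1 (m - k))" for m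
  have "path_in (G j) (i + k) \<rho>\<^sub>1"
    unfolding \<rho>\<^sub>1_def
    using segment_in_append_path_in[OF segment_in_mono[OF seg(2) dag_G_Suc_subset] \<rho>\<^sub>F(2,1)] .
  moreover have "segment_in (G j) i k \<rho>"
    using \<rho>(1) dag_G_antimono[of j "Suc (Suc j)"] by (auto intro: path_in_imp_segment_in path_in_mono)
  ultimately have path: "path_in (G j) i \<rho>'"
    unfolding \<rho>'_def using segment_in_append_path_in seg(1) \<rho>\<^sub>1_def by simp
  have "\<rho>' 0 = p"
    using \<rho>(2) by (simp add: \<rho>'_def)
  have "\<rho>' (k + n) \<in> F"
    using seg(1,3) by (cases n) (simp_all add: \<rho>'_def \<rho>\<^sub>1_def)
  have path': "path_in (G (Suc j)) i (response \<rho>')"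
    using path_in_dag_G_Suc_even[OF \<open>even j\<close> IH[OF path \<open>\<rho>' 0 = p\<close>]] .
  obtain k' where "k + n \<le> k'" "response \<rho>' k' \<in> F"
    using response_visits_accepting[OF path_in_mono[OF path dag_G_subset_dag_V]]
      \<open>\<rho>' 0 = p\<close> \<open>\<rho>' (k + n) \<in> F\<close> by blast
  moreover have "response \<rho>' k = response \<rho> k"
    by (rule response_cong[of k]) (simp_all add: \<rho>'_def)
  ultimately show ?thesis
    using segment_in_suffix[OF path', of k k']
    by (intro exI[of _ "k' - k"] exI[of _ "\<lambda>l. response \<rho>' (k + l)"]) auto
qed

lemma path_in_dag_G_response:
  "path_in (G (2 * j)) i \<rho> \<Longrightarrow> \<rho> 0 = p \<Longrightarrow> path_in (G (2 * j)) i (response \<rho>)"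
proof (induction j arbitrary: \<rho>)
  case 0
  then show ?case
    using path_in_response by simp
next
  case (Suc j)
  have "path_in (G (2 * j)) i \<rho>"
    using Suc.prems(1) dag_G_antimono[of "2 * j" "2 * Suc j"] path_in_mono by simp
  then have "path_in (G (Suc (2 * j))) i (response \<rho>)"
    using Suc path_in_dag_G_Suc_even by simp
  moreover have "\<exists>n \<tau>. \<tau> 0 = response \<rho> k \<and> segment_in (G (Suc (2 * j))) (i + k) n \<tau> \<and> \<tau> n \<in> F" for k
    using response_reaches_accepting[OF Suc.IH] Suc.prems by simp
  ultimately show ?case
    using mem_dag_G_Suc_odd[of "Suc (2 * j)"] by (simp add: path_in_def)
qed

lemma mem_dag_G_Suc_even_transfer:
  assumes "even j" and "(p, i) \<in> G (Suc j)"
  shows "(q, i) \<in> G (Suc j)"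
proof -
  obtain \<rho> where \<rho>: "\<rho> 0 = p" "path_in (G j) i \<rho>"
    using assms mem_dag_G_Suc_even by blast
  obtain m where "j = 2 * m"
    using assms(1) by blast
  then have "path_in (G j) i (response \<rho>)"
    using path_in_dag_G_response \<rho> by blast
  moreover have "response \<rho> 0 = q"
    by simp
  ultimately show ?thesis
    unfolding mem_dag_G_Suc_even[OF assms(1)] by blast
qed

end

theorem lemma6:
  fixes Q :: "'q set" and \<Sigma> :: "'a set" and \<delta> :: "'q \<Rightarrow> 'a \<Rightarrow> 'q set"
    and I F :: "'q set" and p q :: 'q and \<alpha> :: "nat \<Rightarrow> 'a" and i :: nat
  assumes "buchi_automaton Q \<Sigma> \<delta> I F"
    and "complete_aut Q \<Sigma> \<delta>"
    and "p \<in> Q" and "q \<in> Q"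
    and "delayed_sim Q \<Sigma> \<delta> F p q"
    and "word \<Sigma> \<alpha>"
    and "(p, i) \<in> dag_V \<delta> I \<alpha>" and "(q, i) \<in> dag_V \<delta> I \<alpha>"
  shows "rank_of Q \<delta> I F \<alpha> (p, i) \<le> even_ceil (rank_of Q \<delta> I F \<alpha> (q, i))"
proof -
  interpret run_dag Q \<Sigma> \<delta> I F \<alpha>
    using assms(1,6) by unfold_locales
  obtain \<sigma> where "dup_strategy Q \<Sigma> \<delta> \<sigma>"
    and "\<forall>ps \<beta>. word \<Sigma> \<beta> \<longrightarrow> is_run \<delta> p \<beta> ps \<longrightarrow>
      (\<forall>k. ps k \<in> F \<longrightarrow> (\<exists>k'\<ge>k. dup_play \<sigma> ps \<beta> q k' \<in> F))"
    using assms(5) by (auto simp: delayed_sim_def)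
  then interpret duplicator_play Q \<Sigma> \<delta> I F \<alpha> \<sigma> p q i
    using assms(8) by unfold_locales
  show ?thesis
    using rank_le_even_ceil[OF assms(7)] mem_dag_G_Suc_even_transfer by blast
qed

end
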